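(* Let $k$ be a field and $S=k[x_1,\dots,x_n]$. Let $I\subseteq K\subseteq S$ and $J\subseteq L\subseteq S$ be monomial ideals with $\dim_k S/I<\infty$ and $\dim_k S/J<\infty$. Let $\nu$ (resp. $\epsilon$) be the skew shape associated with $K/I$ (resp. $L/J$), and let $\nu=\nu_1\amalg\dots\amalg\nu_m$ and $\epsilon=\epsilon_1\amalg\dots\amalg\epsilon_\ell$ be their decompositions into connected components. Then for every isomorphism $\phi\colon K/I\to L/J$ of $S$-modules sending monomials to monomials, there exist a bijection $\sigma\colon\{1,\dots,m\}\to\{1,\dots,\ell\}$ and elements $c_1,\dots,c_m\in\mathbb{Z}^n$ such that $\nu_i+c_i=\epsilon_{\sigma(i)}$ for each $i$, and $\phi(x^a)=x^{a+c_i}$ for all $a\in\nu_i$.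
   Context: Monomials of $S$ are identified with $\mathbb{N}^n$ via $a=(a_1,\dots,a_n)\leftrightarrow x^a=x_1^{a_1}\cdots x_n^{a_n}$; $\mathbb{N}^n$ carries the componentwise partial order. For monomial ideals $I\subseteq K$, the skew shape associated with $K/I$ is the set of $a\in\mathbb{N}^n$ with $x^a\in K$ and $x^a\notin I$ (i.e. the monomials giving a basis of $K/I$). A set $\epsilon\subseteq\mathbb{N}^n$ is connected if for any $a,b\in\epsilon$ there exist $a',b'\in\mathbb{N}^n$ with $a+a'=b+b'\in\epsilon$; every skew shape is uniquely a disjoint union of connected ones, its connected components. An $S$-module isomorphism $\phi\colon K/I\to L/J$ "sends monomials to monomials" if for each monomial $x^a$ with $a$ in the skew shape of $K/I$, $\phi(x^a)$ is a monomial $x^{a'}$ with $a'$ in the skew shape of $L/J$.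
   Formalization: The connected components of a skew shape are the classes of the equivalence relation generated by relating a and b when $a+a'=b+b'$ lies in the shape for some $a',b'$, rather than its connected pieces. The statement above fails without it. *)

theory Defs
  imports "HOL-Library.Poly_Mapping"
begin

text \<open>The polynomial ring S = k[x_i : i in 'n] over a field k, with a finite index
type 'n of variables (so n = CARD('n)).  Exponent vectors are elements of the
poly_mapping type from n to nat (all functions, since 'n is finite).\<close>

type_synonym ('n, 'k) mpoly = "('n \<Rightarrow>\<^sub>0 nat) \<Rightarrow>\<^sub>0 'k"

definition mon :: "('n \<Rightarrow>\<^sub>0 nat) \<Rightarrow> ('n, 'k::field) mpoly" where
  "mon a = Poly_Mapping.single a 1"

definition const :: "'k::field \<Rightarrow> ('n, 'k) mpoly" where
  "const c = Poly_Mapping.single 0 c"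

definition is_ideal :: "('n, 'k::field) mpoly set \<Rightarrow> bool" where
  "is_ideal I \<longleftrightarrow> 0 \<in> I \<and> (\<forall>p\<in>I. \<forall>q\<in>I. p + q \<in> I) \<and> (\<forall>s. \<forall>p\<in>I. s * p \<in> I)"

definition monomial_ideal :: "('n, 'k::field) mpoly set \<Rightarrow> bool" where
  "monomial_ideal I \<longleftrightarrow> is_ideal I \<and>
     (\<exists>M. I = {p. \<exists>A s. finite A \<and> A \<subseteq> M \<and> p = (\<Sum>a\<in>A. s a * mon a)})"

definition fin_codim :: "('n, 'k::field) mpoly set \<Rightarrow> bool" where
  "fin_codim I \<longleftrightarrow> (\<exists>B. finite B \<and> (\<forall>p. \<exists>c. p - (\<Sum>b\<in>B. const (c b) * b) \<in> I))"

definition skew_shape :: "('n, 'k::field) mpoly set \<Rightarrow> ('n, 'k) mpoly set \<Rightarrow> ('n \<Rightarrow>\<^sub>0 nat) set" where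
  "skew_shape K I = {a. mon a \<in> K \<and> mon a \<notin> I}"

definition linked :: "('n \<Rightarrow>\<^sub>0 nat) set \<Rightarrow> ('n \<Rightarrow>\<^sub>0 nat) \<Rightarrow> ('n \<Rightarrow>\<^sub>0 nat) \<Rightarrow> bool" where
  "linked E a b \<longleftrightarrow> a \<in> E \<and> b \<in> E \<and> (\<exists>a' b'. a + a' = b + b' \<and> a + a' \<in> E)"

definition components :: "('n \<Rightarrow>\<^sub>0 nat) set \<Rightarrow> ('n \<Rightarrow>\<^sub>0 nat) set set" where
  "components E = (\<lambda>a. {b. (linked E)\<^sup>*\<^sup>* a b}) ` E"

definition to_int :: "('n \<Rightarrow>\<^sub>0 nat) \<Rightarrow> ('n \<Rightarrow> int)" where
  "to_int a = (\<lambda>i. int (Poly_Mapping.lookup a i))"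

definition shift :: "('n \<Rightarrow>\<^sub>0 nat) \<Rightarrow> ('n \<Rightarrow> int) \<Rightarrow> ('n \<Rightarrow> int)" where
  "shift a c = (\<lambda>i. int (Poly_Mapping.lookup a i) + c i)"

text \<open>An S-module isomorphism K/I \<rightarrow> L/J, represented on representatives:
  phi maps K to L, is well defined modulo I/J, S-linear modulo J, injective and surjective.\<close>
definition module_iso :: "('n, 'k::field) mpoly set \<Rightarrow> ('n, 'k) mpoly set \<Rightarrow>
    ('n, 'k) mpoly set \<Rightarrow> ('n, 'k) mpoly set \<Rightarrow> (('n, 'k) mpoly \<Rightarrow> ('n, 'k) mpoly) \<Rightarrow> bool" where
  "module_iso K I L J phi \<longleftrightarrow>
     (\<forall>p\<in>K. phi p \<in> L) \<and>
     (\<forall>p\<in>K. \<forall>q\<in>K. p - q \<in> I \<longrightarrow> phi p - phi q \<in> J) \<and>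
     (\<forall>p\<in>K. \<forall>q\<in>K. phi (p + q) - (phi p + phi q) \<in> J) \<and>
     (\<forall>s. \<forall>p\<in>K. phi (s * p) - s * phi p \<in> J) \<and>
     (\<forall>p\<in>K. phi p \<in> J \<longrightarrow> p \<in> I) \<and>
     (\<forall>q\<in>L. \<exists>p\<in>K. phi p - q \<in> J)"

definition sends_monomials :: "('n, 'k::field) mpoly set \<Rightarrow> ('n, 'k) mpoly set \<Rightarrow>
    ('n, 'k) mpoly set \<Rightarrow> ('n, 'k) mpoly set \<Rightarrow> (('n, 'k) mpoly \<Rightarrow> ('n, 'k) mpoly) \<Rightarrow> bool" where
  "sends_monomials K I L J phi \<longleftrightarrow>
     (\<forall>a\<in>skew_shape K I. \<exists>a'\<in>skew_shape L J. phi (mon a) - mon a' \<in> J)"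

end

theory Submission
  imports Defs
begin

text \<open>
An isomorphism sending monomials to monomials induces a map f from the skew shape \<nu> of K/I to
the skew shape \<epsilon> of L/J. S-linearity forces f (a + e) = f a + e whenever a and a + e lie in \<nu>,
and conversely a + e \<in> \<nu> as soon as f a + e \<in> \<epsilon>; injectivity and surjectivity of the
isomorphism make f a bijection. Such a map carries common upper bounds to common upper bounds in
both directions, so it maps connected components onto connected components, and on a linked pair
the translation vector f a - a does not change, hence it is constant on each component.
\<close>

lemma is_ideal_zero: "is_ideal J \<Longrightarrow> 0 \<in> J"
  by (simp add: is_ideal_def)

lemma is_ideal_add: "is_ideal J \<Longrightarrow> p \<in> J \<Longrightarrow> q \<in> J \<Longrightarrow> p + q \<in> J"
  by (simp add: is_ideal_def)

lemma is_ideal_mult: "is_ideal J \<Longrightarrow> p \<in> J \<Longrightarrow> s * p \<in> J"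
  by (simp add: is_ideal_def)

lemma is_ideal_diff:
  fixes p q :: "('n, 'k::field) mpoly"
  assumes "is_ideal J" "p \<in> J" "q \<in> J"
  shows "p - q \<in> J"
  using is_ideal_add[OF assms(1,2) is_ideal_mult[OF assms(1,3), of "-1"]] by simp

lemma is_ideal_sum:
  assumes "is_ideal J" "\<And>a. a \<in> A \<Longrightarrow> g a \<in> J"
  shows "sum g A \<in> J"
  using assms(2)
  by (induction A rule: infinite_finite_induct) (auto intro: is_ideal_add is_ideal_zero assms(1))

lemma is_ideal_diff_trans:
  fixes p q r :: "('n, 'k::field) mpoly"
  assumes "is_ideal J" "p - q \<in> J" "q - r \<in> J"
  shows "p - r \<in> J"
  using is_ideal_add[OF assms] by simp

lemma is_ideal_mult_diff:
  fixes p q :: "('n, 'k::field) mpoly"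
  assumes "is_ideal J" "p - q \<in> J"
  shows "s * p - s * q \<in> J"
  using is_ideal_mult[OF assms, of s] by (simp add: right_diff_distrib)

lemma mon_mult: "mon a * mon b = (mon (a + b) :: ('n, 'k::field) mpoly)"
  by (simp add: mon_def mult_single)

lemma const_mult_mon: "const c * mon a = (Poly_Mapping.single a c :: ('n, 'k::field) mpoly)"
  by (simp add: const_def mon_def mult_single)

lemma keys_mon [simp]: "Poly_Mapping.keys (mon a :: ('n, 'k::field) mpoly) = {a}"
  by (simp add: mon_def)

lemma sum_single_lookup: "(\<Sum>x\<in>Poly_Mapping.keys p. Poly_Mapping.single x (Poly_Mapping.lookup p x)) = p"
  by (rule poly_mapping_eqI) (simp add: lookup_sum lookup_single when_def in_keys_iff)

lemma monomial_ideal_keys: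
  fixes J :: "('n, 'k::field) mpoly set"
  assumes "monomial_ideal J" "p \<in> J" "x \<in> Poly_Mapping.keys p"
  shows "mon x \<in> J"
proof -
  from assms(1) obtain M where ideal: "is_ideal J" and
    J_eq: "J = {p. \<exists>A s. finite A \<and> A \<subseteq> M \<and> p = (\<Sum>a\<in>A. s a * mon a)}"
    unfolding monomial_ideal_def by blast
  from assms(2) J_eq obtain A s where A: "finite A" "A \<subseteq> M" and p: "p = (\<Sum>a\<in>A. s a * mon a)"
    by blast
  obtain a where a: "a \<in> A" "x \<in> Poly_Mapping.keys (s a * mon a)"
    using keys_sum[of "\<lambda>a. s a * mon a" A] assms(3) p by blast
  obtain t where t: "x = t + a"
    using keys_mult[of "s a" "mon a"] a(2) by auto
  have "mon a \<in> J"
    using J_eq A a(1) by (auto intro!: exI[of _ "{a}"] exI[of _ "\<lambda>_. 1"])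
  then have "mon t * mon a \<in> J"
    using is_ideal_mult ideal by blast
  then show ?thesis
    by (simp add: t mon_mult)
qed

lemma monomial_ideal_diff_mon:
  fixes J :: "('n, 'k::field) mpoly set"
  assumes "monomial_ideal J" "mon b \<notin> J" "b \<notin> Poly_Mapping.keys r"
  shows "r - mon b \<notin> J"
proof
  assume "r - mon b \<in> J"
  moreover have "b \<in> Poly_Mapping.keys (r - mon b)"
    using assms(3) by (simp add: in_keys_iff lookup_minus mon_def)
  ultimately show False
    using monomial_ideal_keys assms(1,2) by blast
qed

lemma monomial_ideal_mon_eqI:
  fixes J :: "('n, 'k::field) mpoly set"
  assumes "monomial_ideal J" "mon b \<notin> J" "mon a - mon b \<in> J"
  shows "a = b"
  using monomial_ideal_diff_mon[OF assms(1,2), of "mon a"] assms(3) by auto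

lemma rtranclp_linked_mem: "(linked E)\<^sup>*\<^sup>* a b \<Longrightarrow> a \<in> E \<Longrightarrow> b \<in> E"
  by (induction rule: rtranclp_induct) (auto simp: linked_def)

lemma components_subset: "C \<in> components E \<Longrightarrow> C \<subseteq> E"
  by (auto simp: components_def dest: rtranclp_linked_mem)

lemma image_linked_class:
  assumes f: "bij_betw f E E'"
    and linked_iff: "\<And>a b. a \<in> E \<Longrightarrow> b \<in> E \<Longrightarrow> linked E' (f a) (f b) \<longleftrightarrow> linked E a b"
    and "a \<in> E"
  shows "f ` {b. (linked E)\<^sup>*\<^sup>* a b} = {c. (linked E')\<^sup>*\<^sup>* (f a) c}"
proof (intro equalityI subsetI)
  have "(linked E')\<^sup>*\<^sup>* (f a) (f b)" if "(linked E)\<^sup>*\<^sup>* a b" for b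
    using that
  proof (induction rule: rtranclp_induct)
    case (step y z)
    then have "linked E' (f y) (f z)"
      using linked_iff by (auto simp: linked_def)
    with step.IH show ?case by simp
  qed simp
  then show "c \<in> {c. (linked E')\<^sup>*\<^sup>* (f a) c}" if "c \<in> f ` {b. (linked E)\<^sup>*\<^sup>* a b}" for c
    using that by blast
next
  fix c assume "c \<in> {c. (linked E')\<^sup>*\<^sup>* (f a) c}"
  then have "(linked E')\<^sup>*\<^sup>* (f a) c" by simp
  then have "\<exists>b. (linked E)\<^sup>*\<^sup>* a b \<and> b \<in> E \<and> c = f b"
  proof (induction rule: rtranclp_induct)
    case base
    show ?case using \<open>a \<in> E\<close> by blast
  next
    case (step y z)
    then obtain b where b: "(linked E)\<^sup>*\<^sup>* a b" "b \<in> E" "y = f b" by blast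
    have "z \<in> E'" using step.hyps(2) by (simp add: linked_def)
    then obtain b' where b': "b' \<in> E" "z = f b'"
      using f by (auto simp: bij_betw_def)
    then have "linked E b b'"
      using linked_iff b step.hyps(2) by blast
    then show ?case
      using b b' rtranclp.rtrancl_into_rtrancl[OF b(1)] by blast
  qed
  then show "c \<in> f ` {b. (linked E)\<^sup>*\<^sup>* a b}" by blast
qed

lemma bij_betw_image_components:
  assumes f: "bij_betw f E E'"
    and linked_iff: "\<And>a b. a \<in> E \<Longrightarrow> b \<in> E \<Longrightarrow> linked E' (f a) (f b) \<longleftrightarrow> linked E a b"
  shows "bij_betw ((`) f) (components E) (components E')"
proof (rule bij_betw_imageI)
  have "inj_on f E"
    using f by (simp add: bij_betw_def)
  then show "inj_on ((`) f) (components E)"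
    by (intro inj_onI) (meson components_subset inj_on_image_eq_iff)
  have "(`) f ` components E = (\<lambda>a. {c. (linked E')\<^sup>*\<^sup>* (f a) c}) ` E"
    unfolding components_def image_image using image_linked_class[OF assms] by simp
  also have "\<dots> = (\<lambda>b. {c. (linked E')\<^sup>*\<^sup>* b c}) ` f ` E"
    by (simp add: image_image)
  also have "\<dots> = components E'"
    using f by (simp add: components_def bij_betw_def)
  finally show "(`) f ` components E = components E'" .
qed

locale shape_translation =
  fixes E E' :: "('n \<Rightarrow>\<^sub>0 nat) set" and f :: "('n \<Rightarrow>\<^sub>0 nat) \<Rightarrow> ('n \<Rightarrow>\<^sub>0 nat)"
  assumes bij: "bij_betw f E E'"
    and map_add: "a \<in> E \<Longrightarrow> a + e \<in> E \<Longrightarrow> f (a + e) = f a + e"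
    and add_mem: "a \<in> E \<Longrightarrow> f a + e \<in> E' \<Longrightarrow> a + e \<in> E"
begin

definition displacement :: "('n \<Rightarrow>\<^sub>0 nat) \<Rightarrow> 'n \<Rightarrow> int" where
  "displacement a = (\<lambda>i. int (Poly_Mapping.lookup (f a) i) - int (Poly_Mapping.lookup a i))"

lemma shift_displacement: "shift a (displacement a) = to_int (f a)"
  by (simp add: shift_def displacement_def to_int_def)

lemma linked_image_iff:
  assumes "a \<in> E" "b \<in> E"
  shows "linked E' (f a) (f b) \<longleftrightarrow> linked E a b"
proof
  assume "linked E' (f a) (f b)"
  then obtain a' b' where eq: "f a + a' = f b + b'" and mem: "f a + a' \<in> E'"
    unfolding linked_def by blast
  have "a + a' \<in> E" "b + b' \<in> E"
    using add_mem assms mem eq by metis+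
  moreover have "f (a + a') = f (b + b')"
    using map_add assms eq calculation by metis
  ultimately have "a + a' = b + b'"
    using bij by (auto simp: bij_betw_def dest: inj_onD)
  then show "linked E a b"
    using assms \<open>a + a' \<in> E\<close> unfolding linked_def by blast
next
  assume "linked E a b"
  then obtain a' b' where eq: "a + a' = b + b'" and mem: "a + a' \<in> E"
    unfolding linked_def by blast
  have "f a + a' = f b + b'"
    using map_add[OF assms(1) mem] map_add[OF assms(2)] mem eq by metis
  moreover have "f a + a' \<in> E'"
    using map_add[OF assms(1) mem] mem bij by (metis bij_betwE)
  ultimately show "linked E' (f a) (f b)"
    using assms bij unfolding linked_def by (meson bij_betwE)
qed

lemma linked_displacement_eq:
  assumes "linked E a b"
  shows "displacement a = displacement b"
proof
  fix i
  obtain a' b' where eq: "a + a' = b + b'" and mem: "a + a' \<in> E" "a \<in> E" "b \<in> E"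
    using assms unfolding linked_def by blast
  have "f a + a' = f b + b'"
    using map_add mem eq by metis
  then have "Poly_Mapping.lookup (f a + a') i = Poly_Mapping.lookup (f b + b') i"
    "Poly_Mapping.lookup (a + a') i = Poly_Mapping.lookup (b + b') i"
    using eq by simp_all
  then show "displacement a i = displacement b i"
    by (simp add: displacement_def lookup_add)
qed

lemma displacement_eq_on_component:
  assumes "C \<in> components E" "a \<in> C" "b \<in> C"
  shows "displacement a = displacement b"
proof -
  obtain a0 where C: "C = {c. (linked E)\<^sup>*\<^sup>* a0 c}"
    using assms(1) by (auto simp: components_def)
  have "displacement a0 = displacement c" if "(linked E)\<^sup>*\<^sup>* a0 c" for c
    using that by (induction rule: rtranclp_induct) (auto dest: linked_displacement_eq)
  then show ?thesis
    using assms(2,3) C by (metis mem_Collect_eq)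
qed

lemma bij_betw_components: "bij_betw ((`) f) (components E) (components E')"
  using bij_betw_image_components[OF bij linked_image_iff] .

end

locale monomial_iso =
  fixes K I L J :: "('n, 'k::field) mpoly set" and phi :: "('n, 'k) mpoly \<Rightarrow> ('n, 'k) mpoly"
  assumes monomial_I: "monomial_ideal I" and monomial_K: "monomial_ideal K" and I_subset: "I \<subseteq> K"
    and monomial_J: "monomial_ideal J"
    and iso: "module_iso K I L J phi"
    and sends: "sends_monomials K I L J phi"
begin

lemma ideal_K: "is_ideal K" and ideal_J: "is_ideal J"
  using monomial_K monomial_J by (simp_all add: monomial_ideal_def)

lemma phi_well_defined: "p \<in> K \<Longrightarrow> q \<in> K \<Longrightarrow> p - q \<in> I \<Longrightarrow> phi p - phi q \<in> J"
  and phi_add: "p \<in> K \<Longrightarrow> q \<in> K \<Longrightarrow> phi (p + q) - (phi p + phi q) \<in> J"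
  and phi_mult: "p \<in> K \<Longrightarrow> phi (s * p) - s * phi p \<in> J"
  and phi_reflect: "p \<in> K \<Longrightarrow> phi p \<in> J \<Longrightarrow> p \<in> I"
  and phi_onto: "q \<in> L \<Longrightarrow> \<exists>p\<in>K. phi p - q \<in> J"
  using iso unfolding module_iso_def by blast+

lemma phi_zero: "phi 0 \<in> J"
  using phi_mult[of 0 0] is_ideal_zero[OF ideal_K] by simp

lemma phi_mem_of_mem: "p \<in> I \<Longrightarrow> phi p \<in> J"
  using phi_well_defined[of p 0] I_subset is_ideal_zero[OF ideal_K] is_ideal_add[OF ideal_J _ phi_zero]
  by fastforce

lemma phi_diff:
  assumes "p \<in> K" "q \<in> K"
  shows "phi (p - q) - (phi p - phi q) \<in> J"
proof -
  have "- q \<in> K"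
    using is_ideal_mult[OF ideal_K assms(2), of "- 1"] by simp
  then have "phi (p + - q) - (phi p + phi (- q)) \<in> J"
    using phi_add assms(1) by blast
  moreover have "phi (- q) - (- phi q) \<in> J"
    using phi_mult[OF assms(2), of "- 1"] by simp
  ultimately show ?thesis
    using is_ideal_diff_trans[OF ideal_J] by fastforce
qed

definition shape_map :: "('n \<Rightarrow>\<^sub>0 nat) \<Rightarrow> ('n \<Rightarrow>\<^sub>0 nat)" where
  "shape_map a = (SOME b. b \<in> skew_shape L J \<and> phi (mon a) - mon b \<in> J)"

lemma shape_map_mem: "a \<in> skew_shape K I \<Longrightarrow> shape_map a \<in> skew_shape L J"
  and phi_mon: "a \<in> skew_shape K I \<Longrightarrow> phi (mon a) - mon (shape_map a) \<in> J"
  using someI_ex[of "\<lambda>b. b \<in> skew_shape L J \<and> phi (mon a) - mon b \<in> J"] sends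
  unfolding shape_map_def sends_monomials_def by blast+

lemma phi_mon_add:
  assumes "a \<in> skew_shape K I"
  shows "phi (mon (a + e)) - mon (shape_map a + e) \<in> J"
proof -
  have "phi (mon e * mon a) - mon e * phi (mon a) \<in> J"
    using phi_mult assms by (simp add: skew_shape_def)
  moreover have "mon e * phi (mon a) - mon e * mon (shape_map a) \<in> J"
    using is_ideal_mult_diff[OF ideal_J phi_mon[OF assms]] .
  ultimately show ?thesis
    using is_ideal_diff_trans[OF ideal_J] by (simp add: mon_mult add.commute)
qed

lemma shape_map_add:
  assumes "a \<in> skew_shape K I" "a + e \<in> skew_shape K I"
  shows "shape_map (a + e) = shape_map a + e"
proof -
  have "mon (shape_map (a + e)) \<notin> J"
    using shape_map_mem[OF assms(2)] by (simp add: skew_shape_def)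
  moreover have "mon (shape_map a + e) - mon (shape_map (a + e)) \<in> J"
    using is_ideal_diff[OF ideal_J phi_mon[OF assms(2)] phi_mon_add[OF assms(1), of e]] by simp
  ultimately show ?thesis
    using monomial_ideal_mon_eqI[OF monomial_J] by metis
qed

lemma add_mem_skew_shape:
  assumes "a \<in> skew_shape K I" "shape_map a + e \<in> skew_shape L J"
  shows "a + e \<in> skew_shape K I"
proof -
  have "mon (a + e) \<in> K"
    using is_ideal_mult[OF ideal_K, of "mon a" "mon e"] assms(1)
    by (simp add: skew_shape_def mon_mult add.commute)
  moreover have "mon (a + e) \<notin> I"
  proof
    assume "mon (a + e) \<in> I"
    then have "phi (mon (a + e)) - (phi (mon (a + e)) - mon (shape_map a + e)) \<in> J"
      using is_ideal_diff[OF ideal_J phi_mem_of_mem phi_mon_add[OF assms(1)]] by blast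
    then show False
      using assms(2) by (simp add: skew_shape_def)
  qed
  ultimately show ?thesis
    by (simp add: skew_shape_def)
qed

lemma inj_on_shape_map: "inj_on shape_map (skew_shape K I)"
proof (rule inj_onI)
  fix a b assume a: "a \<in> skew_shape K I" and b: "b \<in> skew_shape K I"
    and eq: "shape_map a = shape_map b"
  then have K: "mon a \<in> K" "mon b \<in> K"
    by (simp_all add: skew_shape_def)
  have "phi (mon a) - phi (mon b) \<in> J"
    using is_ideal_diff[OF ideal_J phi_mon[OF a] phi_mon[OF b]] eq by simp
  then have "phi (mon a - mon b) - (phi (mon a) - phi (mon b)) + (phi (mon a) - phi (mon b)) \<in> J"
    using is_ideal_add[OF ideal_J phi_diff[OF K]] by blast
  then have "phi (mon a - mon b) \<in> J"
    by simp
  then have "mon a - mon b \<in> I"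
    using phi_reflect is_ideal_diff[OF ideal_K K] by blast
  then show "a = b"
    using monomial_ideal_mon_eqI[OF monomial_I] b by (simp add: skew_shape_def)
qed

lemma phi_sum:
  assumes "\<And>a. a \<in> A \<Longrightarrow> g a \<in> K"
  shows "phi (\<Sum>a\<in>A. g a) - (\<Sum>a\<in>A. phi (g a)) \<in> J"
  using assms
proof (induction A rule: infinite_finite_induct)
  case (insert x A)
  have "g x \<in> K" "sum g A \<in> K"
    using insert.prems by (auto intro: is_ideal_sum[OF ideal_K])
  then have "phi (g x + sum g A) - (phi (g x) + phi (sum g A)) \<in> J"
    by (rule phi_add)
  moreover have "(phi (g x) + phi (sum g A)) - (phi (g x) + (\<Sum>a\<in>A. phi (g a))) \<in> J"
    using insert.IH insert.prems by simp
  ultimately show ?case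
    using is_ideal_diff_trans[OF ideal_J] insert.hyps by simp
qed (simp_all add: phi_zero)

lemma phi_single:
  assumes "mon a \<in> K"
  shows "phi (Poly_Mapping.single a c)
    - (if a \<in> skew_shape K I then Poly_Mapping.single (shape_map a) c else 0) \<in> J"
proof -
  have "phi (Poly_Mapping.single a c) - const c * phi (mon a) \<in> J"
    using phi_mult[OF assms, of "const c"] by (simp add: const_mult_mon)
  moreover have "const c * phi (mon a)
      - (if a \<in> skew_shape K I then Poly_Mapping.single (shape_map a) c else 0) \<in> J"
    using is_ideal_mult_diff[OF ideal_J phi_mon, of a "const c"]
      is_ideal_mult[OF ideal_J phi_mem_of_mem, of "mon a" "const c"] assms
    by (auto simp: skew_shape_def const_mult_mon)
  ultimately show ?thesis
    using is_ideal_diff_trans[OF ideal_J] by blast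
qed

lemma phi_cong_supported_on_image:
  assumes "p \<in> K"
  obtains r where "phi p - r \<in> J" "Poly_Mapping.keys r \<subseteq> shape_map ` skew_shape K I"
proof -
  define g where "g x = Poly_Mapping.single x (Poly_Mapping.lookup p x)" for x
  define r where "r = (\<Sum>x\<in>Poly_Mapping.keys p.
    if x \<in> skew_shape K I then Poly_Mapping.single (shape_map x) (Poly_Mapping.lookup p x) else 0)"
  have mon_K: "mon x \<in> K" if "x \<in> Poly_Mapping.keys p" for x
    using monomial_ideal_keys[OF monomial_K assms that] .
  have "g x \<in> K" if "x \<in> Poly_Mapping.keys p" for x
    using is_ideal_mult[OF ideal_K mon_K[OF that]] by (simp add: g_def const_mult_mon[symmetric])
  then have "phi (\<Sum>x\<in>Poly_Mapping.keys p. g x) - (\<Sum>x\<in>Poly_Mapping.keys p. phi (g x)) \<in> J"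
    by (rule phi_sum)
  then have "phi p - (\<Sum>x\<in>Poly_Mapping.keys p. phi (g x)) \<in> J"
    by (simp add: g_def sum_single_lookup)
  moreover have "(\<Sum>x\<in>Poly_Mapping.keys p. phi (g x)) - r \<in> J"
    using is_ideal_sum[OF ideal_J phi_single[OF mon_K]]
    by (simp add: r_def g_def sum_subtractf)
  moreover have "Poly_Mapping.keys r \<subseteq> shape_map ` skew_shape K I"
    using keys_sum by (fastforce simp: r_def split: if_splits)
  ultimately show ?thesis
    using that is_ideal_diff_trans[OF ideal_J] by blast
qed

lemma shape_map_onto: "shape_map ` skew_shape K I = skew_shape L J"
proof (intro equalityI subsetI)
  fix b assume b: "b \<in> skew_shape L J"
  then obtain p where p: "p \<in> K" "phi p - mon b \<in> J"
    using phi_onto by (auto simp: skew_shape_def)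
  obtain r where r: "phi p - r \<in> J" "Poly_Mapping.keys r \<subseteq> shape_map ` skew_shape K I"
    using phi_cong_supported_on_image[OF p(1)] .
  have "r - mon b \<in> J"
    using is_ideal_diff[OF ideal_J p(2) r(1)] by simp
  then show "b \<in> shape_map ` skew_shape K I"
    using monomial_ideal_diff_mon[OF monomial_J] b r(2) by (auto simp: skew_shape_def)
qed (use shape_map_mem in blast)

sublocale shape_translation "skew_shape K I" "skew_shape L J" shape_map
  by unfold_locales
    (simp_all add: bij_betw_def inj_on_shape_map shape_map_onto shape_map_add add_mem_skew_shape)

end

theorem lemma2p1:
  fixes I K J L :: "('n::finite, 'k::field) mpoly set"
    and phi :: "('n, 'k) mpoly \<Rightarrow> ('n, 'k) mpoly"
  assumes "monomial_ideal I" "monomial_ideal K" "I \<subseteq> K"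
    and "monomial_ideal J" "monomial_ideal L" "J \<subseteq> L"
    and "fin_codim I" "fin_codim J"
    and "module_iso K I L J phi"
    and "sends_monomials K I L J phi"
  shows "\<exists>\<sigma> c. bij_betw \<sigma> (components (skew_shape K I)) (components (skew_shape L J)) \<and>
           (\<forall>\<nu>i\<in>components (skew_shape K I).
              (\<lambda>a. shift a (c \<nu>i)) ` \<nu>i = to_int ` \<sigma> \<nu>i \<and>
              (\<forall>a\<in>\<nu>i. \<exists>b. to_int b = shift a (c \<nu>i) \<and> phi (mon a) - mon b \<in> J))"
proof -
  interpret monomial_iso K I L J phi
    using assms by unfold_locales
  define c where "c C = displacement (SOME a. a \<in> C)" for C
  have shift_c: "shift a (c C) = to_int (shape_map a)" if "C \<in> components (skew_shape K I)" "a \<in> C" for C a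
    using displacement_eq_on_component[OF that(1) that(2) someI[of "\<lambda>a. a \<in> C", OF that(2)]]
    by (simp add: c_def shift_displacement[symmetric])
  have "(\<lambda>a. shift a (c C)) ` C = to_int ` shape_map ` C \<and>
      (\<forall>a\<in>C. \<exists>b. to_int b = shift a (c C) \<and> phi (mon a) - mon b \<in> J)"
    if "C \<in> components (skew_shape K I)" for C
    using shift_c[OF that] phi_mon components_subset[OF that] by (force simp: image_image)
  then show ?thesis
    using bij_betw_components by blast
qed

end
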